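(* Let $\Gamma$ be an automatic cross-section with generators $A$ and language of representatives $L$, let $\sigma:A^*\to S$ be an interpretation of $\Gamma$, and let $w\in A^*$. Then $\sigma(w)$ is right cancellable in $S$ if and only if $L_w\circ L_w^{-1}$ is the diagonal relation $\{(u,u):u\in L\}$ on $L$.
   Context: Let $A$ be a finite alphabet, $\$ \notin A$, and let $\delta$ send a pair of words over $A$ to the word over $(A\cup\{\$\})\times(A\cup\{\$\})$ obtained by padding the shorter word on the right with $\$$ and reading both letter by letter. A synchronous automaton recognises a relation $R$ if it accepts exactly $\delta(R)$. A pre-automatic structure $\Gamma$ consists of a finite alphabet $A$, a finite automaton recognising $L\subseteq A^*$, a synchronous automaton recognising $L_=\subseteq L\times L$, and for each $a\in A$ a synchronous automaton recognising $L_a\subseteq L\times L$. An interpretation with respect to a semigroup $S$ is a morphism $\sigma:A^*\to S$ with $\sigma(L)=S$ such that for $u,v\in L$: $(u,v)\in L_=$ iff $\sigma(u)=\sigma(v)$, and $(u,v)\in L_a$ iff $\sigma(ua)=\sigma(v)$. $\Gamma$ is an automatic cross-section (has uniqueness) if it admits an interpretation $\sigma$ whose restriction to $L$ is a bijection onto $S$. Composition of relations is left to right: $R\circ R'=\{(u,v):\exists x,\ (u,x)\in R,\ (x,v)\in R'\}$, and $R^{-1}=\{(v,u):(u,v)\in R\}$. For $w=a_1\cdots a_n$ with $n\ge1$, $a_i\in A$, set $L_w=L_{a_1}\circ\cdots\circ L_{a_n}$, and $L_\epsilon=L_=$ (so $L_w=\{(u,v)\in L\times L:\sigma(uw)=\sigma(v)\}$).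 An element $s\in S$ is right cancellable if $xs=ys$ implies $x=y$ for all $x,y\in S$. *)

theory Defs
  imports Main
begin

definition fa_recognises :: "'c set \<Rightarrow> 'c list set \<Rightarrow> bool" where
  "fa_recognises Alph Lang \<longleftrightarrow>
     (\<exists>(Q::nat set) q0 F t. finite Q \<and> q0 \<in> Q \<and> F \<subseteq> Q \<and>
        (\<forall>q\<in>Q. \<forall>x\<in>Alph. t q x \<in> Q) \<and>
        Lang = {w \<in> lists Alph. foldl t q0 w \<in> F})"

text \<open>Padding: the dollar symbol is represented by None, a letter a by Some a.\<close>

definition pad :: "'a list \<Rightarrow> 'a list \<Rightarrow> ('a option \<times> 'a option) list" where
  "pad u v = map (\<lambda>i. (if i < length u then Some (u ! i) else None,
                        if i < length v then Some (v ! i) else None))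
                 [0..<max (length u) (length v)]"

definition padded_alphabet :: "'a set \<Rightarrow> ('a option \<times> 'a option) set" where
  "padded_alphabet A = (insert None (Some ` A)) \<times> (insert None (Some ` A))"

definition sync_recognises :: "'a set \<Rightarrow> ('a list \<times> 'a list) set \<Rightarrow> bool" where
  "sync_recognises A R \<longleftrightarrow>
     R \<subseteq> lists A \<times> lists A \<and>
     fa_recognises (padded_alphabet A) ((\<lambda>(u, v). pad u v) ` R)"

definition pre_automatic ::
  "'a set \<Rightarrow> 'a list set \<Rightarrow> ('a list \<times> 'a list) set \<Rightarrow> ('a \<Rightarrow> ('a list \<times> 'a list) set) \<Rightarrow> bool" where
  "pre_automatic A L Leq La \<longleftrightarrow>
     finite A \<and> L \<subseteq> lists A \<and> fa_recognises A L \<and>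
     Leq \<subseteq> L \<times> L \<and> sync_recognises A Leq \<and>
     (\<forall>a\<in>A. La a \<subseteq> L \<times> L \<and> sync_recognises A (La a))"

text \<open>Interpretation with respect to the semigroup S (the whole type 'b):
  a morphism sigma from A^* to S with sigma(L) = S, respecting L_= and each L_a.\<close>

definition interpretation_of ::
  "'a set \<Rightarrow> 'a list set \<Rightarrow> ('a list \<times> 'a list) set \<Rightarrow> ('a \<Rightarrow> ('a list \<times> 'a list) set)
     \<Rightarrow> ('a list \<Rightarrow> 'b::semigroup_mult) \<Rightarrow> bool" where
  "interpretation_of A L Leq La sigma \<longleftrightarrow>
     (\<forall>u\<in>lists A. \<forall>v\<in>lists A. sigma (u @ v) = sigma u * sigma v) \<and>
     sigma ` L = UNIV \<and>
     (\<forall>u\<in>L. \<forall>v\<in>L. (u, v) \<in> Leq \<longleftrightarrow> sigma u = sigma v) \<and>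
     (\<forall>a\<in>A. \<forall>u\<in>L. \<forall>v\<in>L. (u, v) \<in> La a \<longleftrightarrow> sigma (u @ [a]) = sigma v)"

definition automatic_cross_section ::
  "'a set \<Rightarrow> 'a list set \<Rightarrow> ('a list \<times> 'a list) set \<Rightarrow> ('a \<Rightarrow> ('a list \<times> 'a list) set)
     \<Rightarrow> 'b::semigroup_mult itself \<Rightarrow> bool" where
  "automatic_cross_section A L Leq La (TYPE('b)) \<longleftrightarrow>
     pre_automatic A L Leq La \<and>
     (\<exists>tau :: 'a list \<Rightarrow> 'b. interpretation_of A L Leq La tau \<and> bij_betw tau L UNIV)"

text \<open>L_w: L_= for the empty word, L_{a1} o ... o L_{an} otherwise (composition left to right,
  which is Isabelle's relcomp O).\<close>

fun Lw :: "('a list \<times> 'a list) set \<Rightarrow> ('a \<Rightarrow> ('a list \<times> 'a list) set) \<Rightarrow> 'a list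
             \<Rightarrow> ('a list \<times> 'a list) set" where
  "Lw Leq La [] = Leq"
| "Lw Leq La [a] = La a"
| "Lw Leq La (a # b # w) = La a O Lw Leq La (b # w)"

definition right_cancellable :: "'b::semigroup_mult \<Rightarrow> bool" where
  "right_cancellable s \<longleftrightarrow> (\<forall>x y. x * s = y * s \<longrightarrow> x = y)"

end

theory Submission
  imports Defs
begin

text \<open>Under an interpretation \<open>\<sigma>\<close>, the relation \<open>L\<^sub>w\<close> is the pull-back to \<open>L\<close> of right
  multiplication by \<open>\<sigma>(w)\<close>. For a cross-section \<open>\<sigma>\<close> is a bijection from \<open>L\<close> onto \<open>S\<close>, so
  \<open>L\<^sub>w \<circ> L\<^sub>w\<inverse>\<close> relates \<open>u\<close> and \<open>u'\<close> exactly when \<open>\<sigma>(u) \<sigma>(w) = \<sigma>(u') \<sigma>(w)\<close>, and this is the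
  diagonal precisely when \<open>\<sigma>(w)\<close> is right cancellable.\<close>

definition right_mult_rel :: "('c \<Rightarrow> 'b::semigroup_mult) \<Rightarrow> 'c set \<Rightarrow> 'b \<Rightarrow> ('c \<times> 'c) set" where
  "right_mult_rel f L s = {(u, v). u \<in> L \<and> v \<in> L \<and> f u * s = f v}"

lemma right_mult_rel_relcomp:
  assumes "f ` L = UNIV"
  shows "right_mult_rel f L s O right_mult_rel f L t = right_mult_rel f L (s * t)"
proof (intro set_eqI iffI)
  fix p assume "p \<in> right_mult_rel f L s O right_mult_rel f L t"
  then show "p \<in> right_mult_rel f L (s * t)"
    unfolding right_mult_rel_def by (auto simp flip: mult.assoc)
next
  fix p assume p: "p \<in> right_mult_rel f L (s * t)"
  obtain x where "x \<in> L" "f x = f (fst p) * s"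
    using assms by (metis UNIV_I imageE)
  with p show "p \<in> right_mult_rel f L s O right_mult_rel f L t"
    unfolding right_mult_rel_def by (auto simp: mult.assoc)
qed

lemma right_mult_rel_relcomp_converse:
  assumes "f ` L = UNIV"
  shows "right_mult_rel f L s O (right_mult_rel f L s)\<inverse> =
    {(u, u'). u \<in> L \<and> u' \<in> L \<and> f u * s = f u' * s}"
proof (intro set_eqI iffI)
  fix p assume "p \<in> right_mult_rel f L s O (right_mult_rel f L s)\<inverse>"
  then show "p \<in> {(u, u'). u \<in> L \<and> u' \<in> L \<and> f u * s = f u' * s}"
    unfolding right_mult_rel_def by auto
next
  fix p assume p: "p \<in> {(u, u'). u \<in> L \<and> u' \<in> L \<and> f u * s = f u' * s}"
  obtain v where "v \<in> L" "f v = f (fst p) * s"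
    using assms by (metis UNIV_I imageE)
  with p show "p \<in> right_mult_rel f L s O (right_mult_rel f L s)\<inverse>"
    unfolding right_mult_rel_def by auto
qed

lemma right_cancellable_iff_right_mult_rel:
  assumes "bij_betw f L UNIV"
  shows "right_cancellable s \<longleftrightarrow> right_mult_rel f L s O (right_mult_rel f L s)\<inverse> = Id_on L"
proof -
  have surj: "f ` L = UNIV" and inj: "inj_on f L"
    using assms by (auto simp: bij_betw_def)
  have "right_cancellable s \<longleftrightarrow> (\<forall>u\<in>L. \<forall>u'\<in>L. f u * s = f u' * s \<longrightarrow> u = u')"
    unfolding right_cancellable_def
    by (metis UNIV_I imageE inj inj_on_contraD surj)
  also have "\<dots> \<longleftrightarrow> {(u, u'). u \<in> L \<and> u' \<in> L \<and> f u * s = f u' * s} = Id_on L"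
    by (auto simp: Id_on_def)
  finally show ?thesis
    using right_mult_rel_relcomp_converse[OF surj] by simp
qed

lemma interpretation_of_append:
  assumes "interpretation_of A L Leq La sigma" "u \<in> lists A" "v \<in> lists A"
  shows "sigma (u @ v) = sigma u * sigma v"
  using assms unfolding interpretation_of_def by blast

lemma interpretation_of_surj:
  assumes "interpretation_of A L Leq La sigma"
  shows "sigma ` L = UNIV"
  using assms unfolding interpretation_of_def by blast

lemma interpretation_of_Leq_iff:
  assumes "interpretation_of A L Leq La sigma" "u \<in> L" "v \<in> L"
  shows "(u, v) \<in> Leq \<longleftrightarrow> sigma u = sigma v"
  using assms unfolding interpretation_of_def by blast

lemma interpretation_of_La_iff:
  assumes "interpretation_of A L Leq La sigma" "a \<in> A" "u \<in> L" "v \<in> L"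
  shows "(u, v) \<in> La a \<longleftrightarrow> sigma (u @ [a]) = sigma v"
  using assms unfolding interpretation_of_def by blast

lemma La_eq_right_mult_rel:
  assumes "L \<subseteq> lists A" "La a \<subseteq> L \<times> L"
    and sigma: "interpretation_of A L Leq La sigma"
    and "a \<in> A"
  shows "La a = right_mult_rel sigma L (sigma [a])"
proof -
  have "sigma (u @ [a]) = sigma u * sigma [a]" if "u \<in> L" for u
    using interpretation_of_append[OF sigma, of u "[a]"] that assms(1,4) by (simp add: subsetD)
  then show ?thesis
    using assms(2,4) interpretation_of_La_iff[OF sigma, of a]
    unfolding right_mult_rel_def by fastforce
qed

lemma Lw_eq_right_mult_rel:
  assumes "L \<subseteq> lists A" "Leq \<subseteq> L \<times> L" "\<forall>a\<in>A. La a \<subseteq> L \<times> L"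
    and sigma: "interpretation_of A L Leq La sigma"
    and "w \<in> lists A"
  shows "Lw Leq La w = right_mult_rel sigma L (sigma w)"
  using \<open>w \<in> lists A\<close>
proof (induction w rule: induct_list012)
  case 1
  have "sigma u * sigma [] = sigma u" if "u \<in> L" for u
    using interpretation_of_append[OF sigma, of u "[]"] that assms(1) by (simp add: subsetD)
  then show ?case
    using assms(2) interpretation_of_Leq_iff[OF sigma]
    unfolding right_mult_rel_def by auto
next
  case (2 a)
  then show ?case
    using La_eq_right_mult_rel[OF assms(1) _ sigma] assms(3) by simp
next
  case (3 a b w)
  have "sigma (a # b # w) = sigma [a] * sigma (b # w)"
    using interpretation_of_append[OF sigma, of "[a]" "b # w"] "3.prems" by simp
  with 3 show ?case
    using La_eq_right_mult_rel[OF assms(1) _ sigma] assms(3)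
      right_mult_rel_relcomp[OF interpretation_of_surj[OF sigma]] by simp
qed

text \<open>Any two interpretations of a pre-automatic structure induce the same kernel \<open>L\<^sub>=\<close>
  on \<open>L\<close>, so each of them is injective on \<open>L\<close> once one of them is.\<close>

lemma automatic_cross_section_interpretation_inj_on:
  assumes "automatic_cross_section A L Leq La TYPE('b::semigroup_mult)"
    and sigma: "interpretation_of A L Leq La (sigma :: 'a list \<Rightarrow> 'b)"
  shows "inj_on sigma L"
proof (rule inj_onI)
  obtain tau :: "'a list \<Rightarrow> 'b" where tau: "interpretation_of A L Leq La tau" "inj_on tau L"
    using assms(1) unfolding automatic_cross_section_def bij_betw_def by blast
  fix u v assume "u \<in> L" "v \<in> L" "sigma u = sigma v"
  then have "tau u = tau v"
    using interpretation_of_Leq_iff[OF sigma] interpretation_of_Leq_iff[OF tau(1)] by blast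
  with tau(2) \<open>u \<in> L\<close> \<open>v \<in> L\<close> show "u = v"
    by (simp add: inj_on_eq_iff)
qed

theorem proposition3p2:
  fixes A :: "'a set" and L :: "'a list set"
    and Leq :: "('a list \<times> 'a list) set" and La :: "'a \<Rightarrow> ('a list \<times> 'a list) set"
    and sigma :: "'a list \<Rightarrow> 'b::semigroup_mult" and w :: "'a list"
  assumes "automatic_cross_section A L Leq La TYPE('b)"
    and "interpretation_of A L Leq La sigma"
    and "w \<in> lists A"
  shows "right_cancellable (sigma w) \<longleftrightarrow> Lw Leq La w O (Lw Leq La w)\<inverse> = Id_on L"
proof -
  have "pre_automatic A L Leq La"
    using assms(1) unfolding automatic_cross_section_def by blast
  then have "Lw Leq La w = right_mult_rel sigma L (sigma w)"
    using Lw_eq_right_mult_rel[OF _ _ _ assms(2,3)] unfolding pre_automatic_def by blast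
  moreover have "bij_betw sigma L UNIV"
    using automatic_cross_section_interpretation_inj_on[OF assms(1,2)] interpretation_of_surj[OF assms(2)]
    by (simp add: bij_betw_def)
  ultimately show ?thesis
    using right_cancellable_iff_right_mult_rel by simp
qed

end
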